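(* Let $\langle A,\to\rangle$ be a conditional algebra and $Y$ a closed subset of the Stone space $\mathrm{Ul}(A)$. Then $\theta(Y)=\{(a,b)\in A^2: Y\cap\varphi(a)=Y\cap\varphi(b)\}$ is a congruence of $\langle A,\to\rangle$ if and only if $Y$ is a $T_A$-closed set.
   Context: A conditional algebra is $\langle A,\to\rangle$ with $A$ a Boolean algebra and $\to$ binary with $a\to1=1$, $(a\to b)\wedge(a\to c)=a\to(b\wedge c)$, $(a\vee b)\to c\le(a\to c)\wedge(b\to c)$. $\mathrm{Ul}(A)$ is the Stone space of ultrafilters, $\varphi(a)=\{u:a\in u\}$; closed sets are $\varphi(F)=\{u:F\subseteq u\}$ for filters $F$ (including $F=A$). $D^{\to}_u(F)=\{b:\exists a\in F,\ a\to b\in u\}$; $T_A(u,Z,v)$ iff there is a filter $F$ with $Z=\varphi(F)$ and $D^{\to}_u(F)\subseteq v$. For $x,y\in\mathrm{Ul}(A)$, $\mathbf{C}(x,y)$ is the set of closed $Z$ with $T_A(x,Z,y)$. A closed set $Y$ is $T_A$-closed if for all $x,y$: if $x\in Y$ and $Z$ is a minimal element (w.r.t. inclusion) of $\mathbf{C}(x,y)$, then $Z\subseteq Y$ and $y\in Y$. *)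

theory Defs
  imports Main
begin

definition conditional_algebra :: "('a::boolean_algebra \<Rightarrow> 'a \<Rightarrow> 'a) \<Rightarrow> bool" where
  "conditional_algebra imp \<longleftrightarrow>
     (\<forall>a. imp a top = top) \<and>
     (\<forall>a b c. inf (imp a b) (imp a c) = imp a (inf b c)) \<and>
     (\<forall>a b c. imp (sup a b) c \<le> inf (imp a c) (imp b c))"

text \<open>Filters of a Boolean algebra (the improper filter UNIV is allowed).\<close>
definition ba_filter :: "'a::boolean_algebra set \<Rightarrow> bool" where
  "ba_filter F \<longleftrightarrow> top \<in> F \<and> (\<forall>a\<in>F. \<forall>b\<in>F. inf a b \<in> F) \<and> (\<forall>a\<in>F. \<forall>b. a \<le> b \<longrightarrow> b \<in> F)"

definition ultrafilter :: "'a::boolean_algebra set \<Rightarrow> bool" where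
  "ultrafilter u \<longleftrightarrow> ba_filter u \<and> u \<noteq> UNIV \<and>
     (\<forall>G. ba_filter G \<and> G \<noteq> UNIV \<and> u \<subseteq> G \<longrightarrow> G = u)"

definition Ul :: "'a::boolean_algebra set set" where
  "Ul = {u. ultrafilter u}"

definition phi :: "'a::boolean_algebra \<Rightarrow> 'a set set" where
  "phi a = {u \<in> Ul. a \<in> u}"

definition phiF :: "'a::boolean_algebra set \<Rightarrow> 'a set set" where
  "phiF F = {u \<in> Ul. F \<subseteq> u}"

text \<open>Closed subsets of the Stone space: exactly the sets phiF F for filters F.\<close>
definition stone_closed :: "'a::boolean_algebra set set \<Rightarrow> bool" where
  "stone_closed Z \<longleftrightarrow> (\<exists>F. ba_filter F \<and> Z = phiF F)"

definition D_imp :: "('a::boolean_algebra \<Rightarrow> 'a \<Rightarrow> 'a) \<Rightarrow> 'a set \<Rightarrow> 'a set \<Rightarrow> 'a set" where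
  "D_imp imp u F = {b. \<exists>a\<in>F. imp a b \<in> u}"

definition T_A :: "('a::boolean_algebra \<Rightarrow> 'a \<Rightarrow> 'a) \<Rightarrow> 'a set \<Rightarrow> 'a set set \<Rightarrow> 'a set \<Rightarrow> bool" where
  "T_A imp u Z v \<longleftrightarrow> (\<exists>F. ba_filter F \<and> Z = phiF F \<and> D_imp imp u F \<subseteq> v)"

definition C_set :: "('a::boolean_algebra \<Rightarrow> 'a \<Rightarrow> 'a) \<Rightarrow> 'a set \<Rightarrow> 'a set \<Rightarrow> 'a set set set" where
  "C_set imp x y = {Z. stone_closed Z \<and> T_A imp x Z y}"

definition minimal_in :: "'b set \<Rightarrow> 'b set set \<Rightarrow> bool" where
  "minimal_in Z S \<longleftrightarrow> Z \<in> S \<and> (\<forall>W\<in>S. W \<subseteq> Z \<longrightarrow> W = Z)"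

definition T_closed :: "('a::boolean_algebra \<Rightarrow> 'a \<Rightarrow> 'a) \<Rightarrow> 'a set set \<Rightarrow> bool" where
  "T_closed imp Y \<longleftrightarrow> stone_closed Y \<and>
     (\<forall>x\<in>Ul. \<forall>y\<in>Ul. \<forall>Z. x \<in> Y \<and> minimal_in Z (C_set imp x y) \<longrightarrow> Z \<subseteq> Y \<and> y \<in> Y)"

definition theta :: "'a::boolean_algebra set set \<Rightarrow> ('a \<times> 'a) set" where
  "theta Y = {(a, b). Y \<inter> phi a = Y \<inter> phi b}"

definition ca_congruence :: "('a::boolean_algebra \<Rightarrow> 'a \<Rightarrow> 'a) \<Rightarrow> ('a \<times> 'a) set \<Rightarrow> bool" where
  "ca_congruence imp \<theta> \<longleftrightarrow> equiv UNIV \<theta> \<and>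
     (\<forall>a b c d. (a, b) \<in> \<theta> \<and> (c, d) \<in> \<theta> \<longrightarrow>
        (inf a c, inf b d) \<in> \<theta> \<and> (sup a c, sup b d) \<in> \<theta> \<and> (imp a c, imp b d) \<in> \<theta>) \<and>
     (\<forall>a b. (a, b) \<in> \<theta> \<longrightarrow> (- a, - b) \<in> \<theta>)"

end

theory Submission
  imports Defs
begin

(* Compatibility with the Boolean operations is automatic for \<theta>(Y), so only the conditional
   matters. The minimal members of C(x, y) are the sets \<phi>(F) for filters F that are maximal with
   D(x, F) \<subseteq> y; by Zorn's lemma every filter with D(x, F) \<subseteq> y lies below one, and
   \<phi>(F) \<subseteq> \<phi>(a) iff a \<in> F by the ultrafilter theorem.

   If Y is T_A-closed, x \<in> Y and a \<rightarrow> c \<in> x but b \<rightarrow> d \<notin> x, where a \<theta> b and c \<theta> d, extend the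
   principal filter of b to such a maximal F and D(x, \<up>b) to an ultrafilter y omitting d.
   T_A-closedness puts \<phi>(F) and y into Y, whence a \<in> F, so c \<in> y and then d \<in> y.

   Conversely let \<theta>(Y) be compatible with \<rightarrow> and Y = \<phi>(G). For g \<in> G we have \<top> \<theta> g, so
   \<top> \<rightarrow> g \<in> x for every x \<in> Y, which puts G into every successor y. Moreover f \<sqinter> g \<theta> f for g \<in> G,
   so joining G to F does not enlarge D(x, F); minimality of \<phi>(F) then gives
   \<phi>(F) = \<phi>(F) \<inter> \<phi>(G) \<subseteq> Y. *)

lemma ba_filter_top: "ba_filter F \<Longrightarrow> top \<in> F"
  by (simp add: ba_filter_def)

lemma ba_filter_inf: "ba_filter F \<Longrightarrow> a \<in> F \<Longrightarrow> b \<in> F \<Longrightarrow> inf a b \<in> F"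
  by (simp add: ba_filter_def)

lemma ba_filter_mono: "ba_filter F \<Longrightarrow> a \<in> F \<Longrightarrow> a \<le> b \<Longrightarrow> b \<in> F"
  by (auto simp add: ba_filter_def)

lemma ba_filter_inf_iff: "ba_filter F \<Longrightarrow> inf a b \<in> F \<longleftrightarrow> a \<in> F \<and> b \<in> F"
  by (meson ba_filter_inf ba_filter_mono inf.cobounded1 inf.cobounded2)

lemma ba_filter_eq_UNIV_iff: "ba_filter F \<Longrightarrow> F = UNIV \<longleftrightarrow> bot \<in> F"
  using ba_filter_mono by (metis UNIV_I UNIV_eq_I bot.extremum)

lemma ba_filter_Union_chain:
  assumes "C \<noteq> {}" and "\<And>F. F \<in> C \<Longrightarrow> ba_filter F" and "chain\<^sub>\<subseteq> C"
  shows "ba_filter (\<Union>C)"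
  unfolding ba_filter_def
proof (intro conjI ballI allI impI)
  show "top \<in> \<Union>C"
    using assms(1,2) ba_filter_top by blast
next
  fix a b assume "a \<in> \<Union>C" "b \<in> \<Union>C"
  then obtain F1 F2 where "F1 \<in> C" "a \<in> F1" "F2 \<in> C" "b \<in> F2"
    by blast
  moreover have "F1 \<subseteq> F2 \<or> F2 \<subseteq> F1"
    using assms(3) \<open>F1 \<in> C\<close> \<open>F2 \<in> C\<close> by (simp add: chain_subset_def)
  ultimately show "inf a b \<in> \<Union>C"
    using assms(2) ba_filter_inf by (metis UnionI subsetD)
next
  fix a b assume "a \<in> \<Union>C" "a \<le> b"
  then show "b \<in> \<Union>C"
    using assms(2) ba_filter_mono by blast
qed

definition principal_filter :: "'a::boolean_algebra \<Rightarrow> 'a set" where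
  "principal_filter a = {e. a \<le> e}"

definition filter_join :: "'a::boolean_algebra set \<Rightarrow> 'a set \<Rightarrow> 'a set" where
  "filter_join F G = {e. \<exists>f\<in>F. \<exists>g\<in>G. inf f g \<le> e}"

lemma ba_filter_principal_filter: "ba_filter (principal_filter a)"
  by (auto simp add: ba_filter_def principal_filter_def)

lemma ba_filter_filter_join:
  assumes "ba_filter F" and "ba_filter G"
  shows "ba_filter (filter_join F G)"
  unfolding ba_filter_def
proof (intro conjI ballI allI impI)
  show "top \<in> filter_join F G"
    using assms ba_filter_top unfolding filter_join_def by fastforce
next
  fix a b assume "a \<in> filter_join F G" "b \<in> filter_join F G"
  then obtain f1 g1 f2 g2 where "f1 \<in> F" "g1 \<in> G" "inf f1 g1 \<le> a"
    and "f2 \<in> F" "g2 \<in> G" "inf f2 g2 \<le> b"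
    unfolding filter_join_def by blast
  moreover have "inf (inf f1 f2) (inf g1 g2) \<le> inf a b"
    using calculation by (meson inf_le1 inf_le2 inf_mono le_inf_iff order_trans)
  ultimately show "inf a b \<in> filter_join F G"
    using assms ba_filter_inf unfolding filter_join_def by blast
next
  fix a b assume "a \<in> filter_join F G" "a \<le> b"
  then show "b \<in> filter_join F G"
    unfolding filter_join_def using order_trans by blast
qed

lemma filter_join_upper1: "ba_filter G \<Longrightarrow> F \<subseteq> filter_join F G"
  unfolding filter_join_def using ba_filter_top inf_le1 by blast

lemma filter_join_upper2: "ba_filter F \<Longrightarrow> G \<subseteq> filter_join F G"
  unfolding filter_join_def using ba_filter_top inf_le2 by blast

lemma filter_join_least: "ba_filter H \<Longrightarrow> F \<subseteq> H \<Longrightarrow> G \<subseteq> H \<Longrightarrow> filter_join F G \<subseteq> H"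
  unfolding filter_join_def using ba_filter_inf ba_filter_mono by blast

lemma maximal_filter_exists:
  assumes "ba_filter F\<^sub>0" and "P F\<^sub>0" and P_Union: "\<And>C. (\<And>F. F \<in> C \<Longrightarrow> P F) \<Longrightarrow> P (\<Union>C)"
  shows "\<exists>F. ba_filter F \<and> F\<^sub>0 \<subseteq> F \<and> P F \<and> (\<forall>G. ba_filter G \<and> F \<subseteq> G \<and> P G \<longrightarrow> G = F)"
proof -
  define S where "S = {F. ba_filter F \<and> F\<^sub>0 \<subseteq> F \<and> P F}"
  have "\<Union>C \<in> S" if "C \<noteq> {}" and "subset.chain S C" for C
  proof -
    have "C \<subseteq> S" and "chain\<^sub>\<subseteq> C"
      using that(2) by (auto simp add: subset_chain_def chain_subset_def)
    then show ?thesis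
      using that(1) ba_filter_Union_chain P_Union unfolding S_def by blast
  qed
  moreover have "S \<noteq> {}"
    using assms unfolding S_def by blast
  ultimately obtain M where "M \<in> S" and "\<forall>G\<in>S. M \<subseteq> G \<longrightarrow> G = M"
    using subset_Zorn_nonempty[of S] by blast
  then show ?thesis
    unfolding S_def by blast
qed

lemma mem_filter_join_principal_filter_iff:
  "a \<in> filter_join F (principal_filter e) \<longleftrightarrow> (\<exists>f\<in>F. inf f e \<le> a)"
  unfolding filter_join_def principal_filter_def
  by (auto intro: order_trans[OF inf_mono[OF order_refl]])

lemma ultrafilter_iff:
  "ultrafilter u \<longleftrightarrow> ba_filter u \<and> u \<noteq> UNIV \<and> (\<forall>e. e \<in> u \<or> - e \<in> u)"
proof
  assume u: "ultrafilter u"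
  then have u_filter: "ba_filter u" and u_proper: "u \<noteq> UNIV"
    by (simp_all add: ultrafilter_def)
  have "e \<in> u \<or> - e \<in> u" for e
  proof (rule ccontr)
    assume neither: "\<not> (e \<in> u \<or> - e \<in> u)"
    let ?G = "filter_join u (principal_filter e)"
    have "u \<subseteq> ?G"
      by (rule filter_join_upper1[OF ba_filter_principal_filter])
    moreover have "e \<in> ?G"
      using ba_filter_top[OF u_filter] mem_filter_join_principal_filter_iff by fastforce
    ultimately have "?G = UNIV"
      using u neither ba_filter_filter_join[OF u_filter ba_filter_principal_filter]
      unfolding ultrafilter_def by blast
    then obtain m where "m \<in> u" "inf m e \<le> bot"
      using mem_filter_join_principal_filter_iff by blast
    then have "- e \<in> u"
      using u_filter ba_filter_mono bot_unique inf_shunt by metis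
    then show False
      using neither by blast
  qed
  then show "ba_filter u \<and> u \<noteq> UNIV \<and> (\<forall>e. e \<in> u \<or> - e \<in> u)"
    using u_filter u_proper by blast
next
  assume u: "ba_filter u \<and> u \<noteq> UNIV \<and> (\<forall>e. e \<in> u \<or> - e \<in> u)"
  have "G = u" if G: "ba_filter G" "G \<noteq> UNIV" "u \<subseteq> G" for G
  proof (rule ccontr)
    assume "G \<noteq> u"
    then obtain g where "g \<in> G" "- g \<in> G"
      using u G(3) by blast
    then have "bot \<in> G"
      using ba_filter_inf[OF G(1)] by fastforce
    then show False
      using G(1,2) ba_filter_eq_UNIV_iff by blast
  qed
  then show "ultrafilter u"
    using u unfolding ultrafilter_def by blast
qed

lemma ultrafilter_compl_iff:
  assumes "ultrafilter u"
  shows "- e \<in> u \<longleftrightarrow> e \<notin> u"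
proof -
  have "bot \<notin> u"
    using assms ba_filter_eq_UNIV_iff by (auto simp add: ultrafilter_def)
  then have "\<not> (e \<in> u \<and> - e \<in> u)"
    using assms ba_filter_inf by (fastforce simp add: ultrafilter_def)
  then show ?thesis
    using assms ultrafilter_iff by blast
qed

lemma ultrafilter_sup_iff:
  assumes "ultrafilter u"
  shows "sup a b \<in> u \<longleftrightarrow> a \<in> u \<or> b \<in> u"
proof -
  have u_filter: "ba_filter u"
    using assms by (simp add: ultrafilter_def)
  have "- sup a b \<in> u \<longleftrightarrow> - a \<in> u \<and> - b \<in> u"
    using ba_filter_inf_iff[OF u_filter] by simp
  then show ?thesis
    using ultrafilter_compl_iff[OF assms] by blast
qed

lemma ultrafilter_exists:
  assumes "ba_filter F" and "a \<notin> F"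
  shows "\<exists>u. ultrafilter u \<and> F \<subseteq> u \<and> a \<notin> u"
proof -
  obtain M where M: "ba_filter M" "F \<subseteq> M" "a \<notin> M"
    and M_max: "\<forall>G. ba_filter G \<and> M \<subseteq> G \<and> a \<notin> G \<longrightarrow> G = M"
    using maximal_filter_exists[of F "\<lambda>G. a \<notin> G"] assms by blast
  have below_a: "\<exists>m\<in>M. inf m e \<le> a" if "e \<notin> M" for e
  proof -
    let ?G = "filter_join M (principal_filter e)"
    have "M \<subseteq> ?G"
      by (rule filter_join_upper1[OF ba_filter_principal_filter])
    moreover have "e \<in> ?G"
      using ba_filter_top[OF M(1)] mem_filter_join_principal_filter_iff by fastforce
    ultimately have "a \<in> ?G"
      using M_max that ba_filter_filter_join[OF M(1) ba_filter_principal_filter] by blast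
    then show ?thesis
      using mem_filter_join_principal_filter_iff by blast
  qed
  have "e \<in> M \<or> - e \<in> M" for e
  proof (rule ccontr)
    assume "\<not> (e \<in> M \<or> - e \<in> M)"
    then obtain m1 m2 where m: "m1 \<in> M" "m2 \<in> M" and "inf m1 e \<le> a" "inf m2 (- e) \<le> a"
      using below_a by meson
    moreover have "inf m1 m2 = sup (inf (inf m1 m2) e) (inf (inf m1 m2) (- e))"
      by (metis inf_sup_distrib1 sup_compl_top inf_top_right)
    moreover have "inf (inf m1 m2) e \<le> inf m1 e" and "inf (inf m1 m2) (- e) \<le> inf m2 (- e)"
      by (simp_all add: inf.coboundedI1 inf.coboundedI2 le_infI1 le_infI2)
    ultimately have "inf m1 m2 \<le> a"
      by (metis order_trans sup_least)
    then show False
      using M ba_filter_mono ba_filter_inf[OF M(1) m] by blast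
  qed
  then have "ultrafilter M"
    using M ultrafilter_iff by blast
  then show ?thesis
    using M by blast
qed

lemma phiF_subset_phi_iff:
  assumes "ba_filter F"
  shows "phiF F \<subseteq> phi a \<longleftrightarrow> a \<in> F"
proof
  assume "phiF F \<subseteq> phi a"
  show "a \<in> F"
  proof (rule ccontr)
    assume "a \<notin> F"
    then obtain u where "ultrafilter u" "F \<subseteq> u" "a \<notin> u"
      using ultrafilter_exists assms by blast
    then show False
      using \<open>phiF F \<subseteq> phi a\<close> unfolding phiF_def phi_def Ul_def by blast
  qed
qed (auto simp add: phiF_def phi_def)

lemma phiF_subset_phiF_iff:
  assumes "ba_filter G"
  shows "phiF G \<subseteq> phiF F \<longleftrightarrow> F \<subseteq> G"
proof
  assume "phiF G \<subseteq> phiF F"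
  then have "phiF G \<subseteq> phi f" if "f \<in> F" for f
    using that unfolding phiF_def phi_def by blast
  then show "F \<subseteq> G"
    using phiF_subset_phi_iff[OF assms] by blast
qed (auto simp add: phiF_def)

lemma phiF_filter_join:
  assumes "ba_filter F" and "ba_filter G"
  shows "phiF (filter_join F G) = phiF F \<inter> phiF G"
proof
  show "phiF (filter_join F G) \<subseteq> phiF F \<inter> phiF G"
    using filter_join_upper1[OF assms(2)] filter_join_upper2[OF assms(1)]
    unfolding phiF_def by blast
  show "phiF F \<inter> phiF G \<subseteq> phiF (filter_join F G)"
  proof
    fix u assume "u \<in> phiF F \<inter> phiF G"
    then have "u \<in> Ul" and "F \<subseteq> u" and "G \<subseteq> u"
      unfolding phiF_def by auto
    moreover from \<open>u \<in> Ul\<close> have "ba_filter u"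
      by (simp add: Ul_def ultrafilter_def)
    ultimately show "u \<in> phiF (filter_join F G)"
      using filter_join_least unfolding phiF_def by blast
  qed
qed

lemma conditional_algebra_imp_top: "conditional_algebra imp \<Longrightarrow> imp a top = top"
  by (simp add: conditional_algebra_def)

lemma conditional_algebra_imp_inf:
  "conditional_algebra imp \<Longrightarrow> inf (imp a b) (imp a c) = imp a (inf b c)"
  by (simp add: conditional_algebra_def)

lemma conditional_algebra_imp_mono:
  assumes "conditional_algebra imp" and "b \<le> c"
  shows "imp a b \<le> imp a c"
proof -
  have "imp a b = inf (imp a b) (imp a c)"
    using conditional_algebra_imp_inf[OF assms(1)] assms(2) by (simp add: inf_absorb1)
  then show ?thesis
    by (metis inf_le2)
qed

lemma conditional_algebra_imp_antimono:
  assumes "conditional_algebra imp" and "a \<le> a'"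
  shows "imp a' c \<le> imp a c"
proof -
  have "imp a' c = imp (sup a a') c"
    using assms(2) by (simp add: sup_absorb2)
  also have "\<dots> \<le> inf (imp a c) (imp a' c)"
    using assms(1) unfolding conditional_algebra_def by blast
  finally show ?thesis
    by simp
qed

lemma D_imp_Union: "D_imp imp x (\<Union>C) = (\<Union>F\<in>C. D_imp imp x F)"
  unfolding D_imp_def by blast

lemma D_imp_principal_filter:
  assumes "conditional_algebra imp" and "ba_filter x"
  shows "D_imp imp x (principal_filter b) = {e. imp b e \<in> x}"
  unfolding D_imp_def principal_filter_def
  using conditional_algebra_imp_antimono[OF assms(1)] ba_filter_mono[OF assms(2)] by blast

lemma ba_filter_D_imp:
  assumes "conditional_algebra imp" and "ba_filter x" and "ba_filter F"
  shows "ba_filter (D_imp imp x F)"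
  unfolding ba_filter_def
proof (intro conjI ballI allI impI)
  show "top \<in> D_imp imp x F"
    using ba_filter_top[OF assms(3)] ba_filter_top[OF assms(2)]
      conditional_algebra_imp_top[OF assms(1)] unfolding D_imp_def by fastforce
next
  fix b1 b2 assume "b1 \<in> D_imp imp x F" "b2 \<in> D_imp imp x F"
  then obtain a1 a2 where "a1 \<in> F" "imp a1 b1 \<in> x" "a2 \<in> F" "imp a2 b2 \<in> x"
    unfolding D_imp_def by blast
  moreover have "imp a1 b1 \<le> imp (inf a1 a2) b1" and "imp a2 b2 \<le> imp (inf a1 a2) b2"
    by (simp_all add: conditional_algebra_imp_antimono[OF assms(1)])
  ultimately have "inf a1 a2 \<in> F" and "imp (inf a1 a2) (inf b1 b2) \<in> x"
    using ba_filter_inf[OF assms(3)] ba_filter_mono[OF assms(2)] ba_filter_inf[OF assms(2)]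
      conditional_algebra_imp_inf[OF assms(1)] by metis+
  then show "inf b1 b2 \<in> D_imp imp x F"
    unfolding D_imp_def by blast
next
  fix b1 b2 assume "b1 \<in> D_imp imp x F" "b1 \<le> b2"
  then show "b2 \<in> D_imp imp x F"
    unfolding D_imp_def
    using conditional_algebra_imp_mono[OF assms(1)] ba_filter_mono[OF assms(2)] by blast
qed

lemma minimal_C_set_exists:
  assumes "ba_filter F\<^sub>0" and "D_imp imp x F\<^sub>0 \<subseteq> y"
  shows "\<exists>F. ba_filter F \<and> F\<^sub>0 \<subseteq> F \<and> D_imp imp x F \<subseteq> y \<and> minimal_in (phiF F) (C_set imp x y)"
proof -
  have "D_imp imp x (\<Union>C) \<subseteq> y" if "\<And>F. F \<in> C \<Longrightarrow> D_imp imp x F \<subseteq> y" for C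
    using that by (auto simp add: D_imp_Union)
  then obtain F where F: "ba_filter F" "F\<^sub>0 \<subseteq> F" "D_imp imp x F \<subseteq> y"
    and F_max: "\<forall>G. ba_filter G \<and> F \<subseteq> G \<and> D_imp imp x G \<subseteq> y \<longrightarrow> G = F"
    using maximal_filter_exists[of F\<^sub>0 "\<lambda>G. D_imp imp x G \<subseteq> y", OF assms] by blast
  have "minimal_in (phiF F) (C_set imp x y)"
    unfolding minimal_in_def
  proof (intro conjI ballI impI)
    show "phiF F \<in> C_set imp x y"
      using F unfolding C_set_def stone_closed_def T_A_def by blast
    fix W assume "W \<in> C_set imp x y" and "W \<subseteq> phiF F"
    then obtain G where "ba_filter G" "W = phiF G" "D_imp imp x G \<subseteq> y"
      unfolding C_set_def T_A_def by blast
    then show "W = phiF F"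
      using \<open>W \<subseteq> phiF F\<close> phiF_subset_phiF_iff F_max by blast
  qed
  then show ?thesis
    using F by blast
qed

lemma stone_closed_subset_Ul: "stone_closed Y \<Longrightarrow> Y \<subseteq> Ul"
  unfolding stone_closed_def phiF_def by blast

lemma mem_theta_iff: "Y \<subseteq> Ul \<Longrightarrow> (a, b) \<in> theta Y \<longleftrightarrow> (\<forall>u\<in>Y. a \<in> u \<longleftrightarrow> b \<in> u)"
  unfolding theta_def phi_def by blast

lemma equiv_theta: "equiv UNIV (theta Y)"
  unfolding equiv_def refl_on_def sym_def trans_def theta_def by auto

definition imp_compatible :: "('a \<Rightarrow> 'a \<Rightarrow> 'a) \<Rightarrow> ('a \<times> 'a) set \<Rightarrow> bool" where
  "imp_compatible imp \<theta> \<longleftrightarrow>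
     (\<forall>a b c d. (a, b) \<in> \<theta> \<and> (c, d) \<in> \<theta> \<longrightarrow> (imp a c, imp b d) \<in> \<theta>)"

lemma ca_congruence_theta_iff:
  assumes "Y \<subseteq> Ul"
  shows "ca_congruence imp (theta Y) \<longleftrightarrow> imp_compatible imp (theta Y)"
proof -
  have ultra: "ultrafilter u" if "u \<in> Y" for u
    using that assms by (simp add: Ul_def subset_iff)
  have "(inf a c, inf b d) \<in> theta Y \<and> (sup a c, sup b d) \<in> theta Y"
    if "(a, b) \<in> theta Y" and "(c, d) \<in> theta Y" for a b c d
    using that ultra ba_filter_inf_iff ultrafilter_sup_iff
    unfolding mem_theta_iff[OF assms] ultrafilter_def by metis
  moreover have "(- a, - b) \<in> theta Y" if "(a, b) \<in> theta Y" for a b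
    using that ultra ultrafilter_compl_iff unfolding mem_theta_iff[OF assms] by metis
  ultimately show ?thesis
    unfolding ca_congruence_def imp_compatible_def using equiv_theta by blast
qed

lemma imp_mem_transfer_if_T_closed:
  assumes ca: "conditional_algebra imp" and T: "T_closed imp Y"
    and ab: "(a, b) \<in> theta Y" and cd: "(c, d) \<in> theta Y"
    and x: "x \<in> Y" and ac: "imp a c \<in> x"
  shows "imp b d \<in> x"
proof (rule ccontr)
  assume "imp b d \<notin> x"
  have Y_Ul: "Y \<subseteq> Ul"
    using T stone_closed_subset_Ul unfolding T_closed_def by blast
  then have x_filter: "ba_filter x"
    using x by (auto simp add: Ul_def ultrafilter_def)
  have "d \<notin> D_imp imp x (principal_filter b)"
    using \<open>imp b d \<notin> x\<close> D_imp_principal_filter[OF ca x_filter] by blast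
  then obtain y where y: "ultrafilter y" "D_imp imp x (principal_filter b) \<subseteq> y" "d \<notin> y"
    using ultrafilter_exists ba_filter_D_imp[OF ca x_filter ba_filter_principal_filter] by blast
  then obtain F where F: "ba_filter F" "principal_filter b \<subseteq> F" "D_imp imp x F \<subseteq> y"
    and F_min: "minimal_in (phiF F) (C_set imp x y)"
    using minimal_C_set_exists[OF ba_filter_principal_filter] by blast
  have "phiF F \<subseteq> Y" and "y \<in> Y"
    using T x F_min y(1) Y_Ul unfolding T_closed_def Ul_def by blast+
  moreover have "b \<in> F"
    using F(2) unfolding principal_filter_def by blast
  ultimately have "phiF F \<subseteq> phi a"
    using ab unfolding mem_theta_iff[OF Y_Ul] phiF_def phi_def by blast
  then have "c \<in> y"
    using phiF_subset_phi_iff[OF F(1)] ac F(3) unfolding D_imp_def by blast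
  then show False
    using cd \<open>y \<in> Y\<close> y(3) unfolding mem_theta_iff[OF Y_Ul] by blast
qed

lemma imp_compatible_theta_if_T_closed:
  assumes "conditional_algebra imp" and "T_closed imp Y"
  shows "imp_compatible imp (theta Y)"
  unfolding imp_compatible_def
proof (intro allI impI)
  fix a b c d assume related: "(a, b) \<in> theta Y \<and> (c, d) \<in> theta Y"
  then have "(b, a) \<in> theta Y \<and> (d, c) \<in> theta Y"
    using equiv_theta unfolding equiv_def sym_def by blast
  moreover have "Y \<subseteq> Ul"
    using assms(2) stone_closed_subset_Ul unfolding T_closed_def by blast
  ultimately show "(imp a c, imp b d) \<in> theta Y"
    using related imp_mem_transfer_if_T_closed[OF assms] mem_theta_iff by metis
qed

lemma successor_mem_if_imp_compatible_theta:
  assumes ca: "conditional_algebra imp" and comp: "imp_compatible imp (theta Y)"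
    and Y: "Y = phiF G" and x: "x \<in> Y"
    and F: "ba_filter F" and D: "D_imp imp x F \<subseteq> y" and y: "y \<in> Ul"
  shows "y \<in> Y"
proof -
  have Y_Ul: "Y \<subseteq> Ul"
    using Y unfolding phiF_def by blast
  have "g \<in> y" if "g \<in> G" for g
  proof -
    have "(top, g) \<in> theta Y"
      using that Y ba_filter_top
      unfolding mem_theta_iff[OF Y_Ul] phiF_def Ul_def ultrafilter_def by blast
    then have "(imp top top, imp top g) \<in> theta Y"
      using comp equiv_theta unfolding imp_compatible_def equiv_def refl_on_def by blast
    moreover have "imp top top \<in> x"
      using conditional_algebra_imp_top[OF ca] x Y_Ul ba_filter_top
      unfolding Ul_def ultrafilter_def by auto
    ultimately have "imp top g \<in> x"
      using x unfolding mem_theta_iff[OF Y_Ul] by blast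
    then show "g \<in> y"
      using D ba_filter_top[OF F] unfolding D_imp_def by blast
  qed
  then show ?thesis
    using Y y unfolding phiF_def by blast
qed

lemma D_imp_filter_join_subset_if_imp_compatible_theta:
  assumes ca: "conditional_algebra imp" and comp: "imp_compatible imp (theta Y)"
    and Y: "Y = phiF G" and x: "x \<in> Y" and D: "D_imp imp x F \<subseteq> y"
  shows "D_imp imp x (filter_join F G) \<subseteq> y"
proof
  have Y_Ul: "Y \<subseteq> Ul"
    using Y unfolding phiF_def by blast
  then have x_filter: "ba_filter x"
    using x by (auto simp add: Ul_def ultrafilter_def)
  fix e assume "e \<in> D_imp imp x (filter_join F G)"
  then obtain f g a where "f \<in> F" "g \<in> G" "inf f g \<le> a" "imp a e \<in> x"
    unfolding D_imp_def filter_join_def by blast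
  then have "imp (inf f g) e \<in> x"
    using conditional_algebra_imp_antimono[OF ca] ba_filter_mono[OF x_filter] by blast
  moreover have "(inf f g, f) \<in> theta Y"
    using \<open>g \<in> G\<close> Y ba_filter_inf_iff
    unfolding mem_theta_iff[OF Y_Ul] phiF_def Ul_def ultrafilter_def by blast
  then have "(imp (inf f g) e, imp f e) \<in> theta Y"
    using comp equiv_theta unfolding imp_compatible_def equiv_def refl_on_def by blast
  ultimately have "imp f e \<in> x"
    using x unfolding mem_theta_iff[OF Y_Ul] by blast
  then show "e \<in> y"
    using D \<open>f \<in> F\<close> unfolding D_imp_def by blast
qed

lemma T_closed_if_imp_compatible_theta:
  assumes ca: "conditional_algebra imp" and Y_closed: "stone_closed Y"
    and comp: "imp_compatible imp (theta Y)"
  shows "T_closed imp Y"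
  unfolding T_closed_def
proof (intro conjI ballI allI impI)
  show "stone_closed Y"
    by (rule Y_closed)
  obtain G where G: "ba_filter G" "Y = phiF G"
    using Y_closed unfolding stone_closed_def by blast
  fix x y Z assume "y \<in> Ul" and xZ: "x \<in> Y \<and> minimal_in Z (C_set imp x y)"
  then obtain F where F: "ba_filter F" "Z = phiF F" "D_imp imp x F \<subseteq> y"
    unfolding minimal_in_def C_set_def T_A_def by blast
  show "y \<in> Y"
    using successor_mem_if_imp_compatible_theta[OF ca comp G(2)] xZ F(1,3) \<open>y \<in> Ul\<close> by blast
  have "phiF (filter_join F G) \<in> C_set imp x y"
    using ba_filter_filter_join[OF F(1) G(1)]
      D_imp_filter_join_subset_if_imp_compatible_theta[OF ca comp G(2)] xZ F(3)
    unfolding C_set_def stone_closed_def T_A_def by blast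
  moreover have "phiF (filter_join F G) \<subseteq> Z"
    using phiF_filter_join[OF F(1) G(1)] F(2) by blast
  ultimately have "phiF (filter_join F G) = Z"
    using xZ unfolding minimal_in_def by blast
  then show "Z \<subseteq> Y"
    using phiF_filter_join[OF F(1) G(1)] G(2) by blast
qed

theorem theorem8p3:
  fixes imp :: "'a::boolean_algebra \<Rightarrow> 'a \<Rightarrow> 'a" and Y :: "'a set set"
  assumes "conditional_algebra imp"
    and "stone_closed Y"
  shows "ca_congruence imp (theta Y) \<longleftrightarrow> T_closed imp Y"
  using ca_congruence_theta_iff[OF stone_closed_subset_Ul[OF assms(2)]]
    imp_compatible_theta_if_T_closed[OF assms(1)]
    T_closed_if_imp_compatible_theta[OF assms]
  by blast

end
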